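(* Let $S\subseteq\mathbb Z^d$ be a standard semigroup, let $T_\bullet$ be a $p$-system of ideals of $S$, and let $H$ be any truncating halfspace for $\operatorname{cone}(S)$. Then \[\lim_{q\to\infty}\frac{\#(T_q\cap qH)}{q^d}=\operatorname{vol}_{\mathbb R^d}\big(\Delta(S,T_\bullet)\cap H\big).\]
   Context: $p$ prime; $q$ ranges over powers $p^e$, $e\ge0$. A semigroup is a subset of $\mathbb Z^d$ containing $0$ and closed under addition; an ideal of a semigroup $S$ is a subset $T\subseteq S$ with $S+T\subseteq T$. $\operatorname{cone}(U)$ is the closure of the set of nonnegative real linear combinations of elements of $U$. A closed convex cone $C\subseteq\mathbb R^d$ is pointed if there exists $\mathbf b\in\mathbb R^d$ with $\langle\mathbf u,\mathbf b\rangle>0$ for all nonzero $\mathbf u\in C$; for such $\mathbf b$ and a real $\alpha\ge0$, $H=\{\mathbf u\in\mathbb R^d:\langle\mathbf u,\mathbf b\rangle<\alpha\}$ is called a truncating halfspace for $C$. A semigroup $S$ is standard if $S-S=\mathbb Z^d$ and $\operatorname{cone}(S)$ is pointed. A $p$-system of ideals of $S$ is a sequence $T_\bullet=\{T_q\}$ of ideals of $S$ indexed by powers $q$ of $p$ with $pT_q\subseteq T_{pq}$ for all $q$. The $p$-body is $\Delta(S,T_\bullet)=\bigcup_q\big(\tfrac1qT_q+\operatorname{cone}(S)\big)$ (Minkowski sums). $qH=\{q\mathbf u:\mathbf u\in H\}$; $\operatorname{vol}_{\mathbb R^d}$ is Lebesgue measure. *)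

theory Defs
  imports "HOL-Analysis.Analysis"
begin

text \<open>Lattice points of Z^d are modelled as int^'n, with d = CARD('n).\<close>

definition rvec :: "int^'n \<Rightarrow> real^'n" where
  "rvec x = (\<chi> i. real_of_int (x $ i))"

definition is_semigroup :: "(int^'n) set \<Rightarrow> bool" where
  "is_semigroup S \<longleftrightarrow> 0 \<in> S \<and> (\<forall>x\<in>S. \<forall>y\<in>S. x + y \<in> S)"

definition is_ideal :: "(int^'n) set \<Rightarrow> (int^'n) set \<Rightarrow> bool" where
  "is_ideal S T \<longleftrightarrow> T \<subseteq> S \<and> (\<forall>s\<in>S. \<forall>t\<in>T. s + t \<in> T)"

definition cone_of :: "(real^'n) set \<Rightarrow> (real^'n) set" where
  "cone_of U = closure {x. \<exists>F c. finite F \<and> F \<subseteq> U \<and> (\<forall>u\<in>F. c u \<ge> 0)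
                              \<and> x = (\<Sum>u\<in>F. c u *\<^sub>R u)}"

definition pointed :: "(real^'n) set \<Rightarrow> bool" where
  "pointed C \<longleftrightarrow> (\<exists>b. \<forall>u\<in>C. u \<noteq> 0 \<longrightarrow> inner u b > 0)"

definition truncating_halfspace :: "(real^'n) set \<Rightarrow> (real^'n) set \<Rightarrow> bool" where
  "truncating_halfspace C H \<longleftrightarrow>
     (\<exists>b \<alpha>. (\<forall>u\<in>C. u \<noteq> 0 \<longrightarrow> inner u b > 0) \<and> \<alpha> \<ge> 0 \<and> H = {u. inner u b < \<alpha>})"

definition standard_semigroup :: "(int^'n) set \<Rightarrow> bool" where
  "standard_semigroup S \<longleftrightarrow> is_semigroup S \<and> {x - y | x y. x \<in> S \<and> y \<in> S} = UNIV
      \<and> pointed (cone_of (rvec ` S))"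

definition int_scale :: "int \<Rightarrow> int^'n \<Rightarrow> int^'n" where
  "int_scale k x = (\<chi> i. k * x $ i)"

text \<open>T is indexed by q; only the values at powers q = p^e matter.\<close>
definition p_system :: "nat \<Rightarrow> (int^'n) set \<Rightarrow> (nat \<Rightarrow> (int^'n) set) \<Rightarrow> bool" where
  "p_system p S T \<longleftrightarrow> (\<forall>e. is_ideal S (T (p ^ e))
      \<and> int_scale (int p) ` T (p ^ e) \<subseteq> T (p ^ Suc e))"

definition p_body :: "nat \<Rightarrow> (int^'n) set \<Rightarrow> (nat \<Rightarrow> (int^'n) set) \<Rightarrow> (real^'n) set" where
  "p_body p S T = (\<Union>e. {(1 / real (p ^ e)) *\<^sub>R rvec t + c | t c. t \<in> T (p ^ e) \<and> c \<in> cone_of (rvec ` S)})"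

end

theory Submission
  imports Defs
begin

text \<open>Scaled by \<open>1/q\<close>, the counted points are points of the grid \<open>q\<^sup>-\<^sup>1\<int>\<^sup>d\<close>, so the normalised count is
  the volume of a union of grid cubes of side \<open>1/q\<close>.

  Upper bound: fix a lattice vector \<open>v\<close> with \<open>v + [0,1]\<^sup>d\<close> inside the cone of \<open>S\<close>. Shifting each
  counted point by \<open>v\<close> places its cube inside the body truncated at level \<open>\<alpha> + O(1/q)\<close>, and these
  truncations decrease to the body truncated at \<open>\<alpha>\<close> up to a hyperplane.

  Lower bound: almost every point \<open>x\<close> of the truncated body lies in \<open>t/p\<^sup>e + int(cone G)\<close> for some
  \<open>t \<in> T(p\<^sup>e)\<close> and finite \<open>G \<subseteq> S\<close>. A fixed shift \<open>w\<close> saturates \<open>S\<close> on the lattice points of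
  \<open>cone G\<close>, i.e. \<open>w + (\<int>\<^sup>d \<inter> cone G) \<subseteq> S\<close>, so since \<open>w/q \<rightarrow> 0\<close>, for all large \<open>q\<close> the grid cube
  containing \<open>x\<close> has its corner in \<open>T(q)\<close>. A Fatou-type argument turns this pointwise statement
  into the lower bound on the count.\<close>

definition conic_combinations :: "(real^'n) set \<Rightarrow> (real^'n) set" where
  "conic_combinations U =
     {x. \<exists>F c. finite F \<and> F \<subseteq> U \<and> (\<forall>u\<in>F. c u \<ge> 0) \<and> x = (\<Sum>u\<in>F. c u *\<^sub>R u)}"

lemma cone_of_eq_closure: "cone_of U = closure (conic_combinations U)"
  by (simp add: cone_of_def conic_combinations_def)

lemma conic_combinations_0: "0 \<in> conic_combinations U"
  unfolding conic_combinations_def by (intro CollectI exI[of _ "{}"]) auto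

lemma conic_combinations_base: "u \<in> U \<Longrightarrow> u \<in> conic_combinations U"
  unfolding conic_combinations_def by (intro CollectI exI[of _ "{u}"] exI[of _ "\<lambda>_. 1"]) auto

lemma conic_combinations_scaleR:
  assumes "x \<in> conic_combinations U" "a \<ge> 0"
  shows "a *\<^sub>R x \<in> conic_combinations U"
proof -
  obtain F c where F: "finite F" "F \<subseteq> U" "\<forall>u\<in>F. c u \<ge> 0" "x = (\<Sum>u\<in>F. c u *\<^sub>R u)"
    using assms(1) unfolding conic_combinations_def by blast
  show ?thesis unfolding conic_combinations_def
    using F assms(2) by (intro CollectI exI[of _ F] exI[of _ "\<lambda>u. a * c u"]) (auto simp: scaleR_sum_right)
qed

lemma conic_combinations_add:
  assumes "x \<in> conic_combinations U" "y \<in> conic_combinations U"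
  shows "x + y \<in> conic_combinations U"
proof -
  obtain F1 c1 where F1: "finite F1" "F1 \<subseteq> U" "\<forall>u\<in>F1. c1 u \<ge> 0" "x = (\<Sum>u\<in>F1. c1 u *\<^sub>R u)"
    using assms(1) unfolding conic_combinations_def by blast
  obtain F2 c2 where F2: "finite F2" "F2 \<subseteq> U" "\<forall>u\<in>F2. c2 u \<ge> 0" "y = (\<Sum>u\<in>F2. c2 u *\<^sub>R u)"
    using assms(2) unfolding conic_combinations_def by blast
  define c where "c u = (if u \<in> F1 then c1 u else 0) + (if u \<in> F2 then c2 u else 0)" for u
  have "x = (\<Sum>u\<in>F1\<union>F2. (if u \<in> F1 then c1 u else 0) *\<^sub>R u)"
    unfolding F1(4) by (rule sum.mono_neutral_cong_left) (use F1 F2 in auto)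
  moreover have "y = (\<Sum>u\<in>F1\<union>F2. (if u \<in> F2 then c2 u else 0) *\<^sub>R u)"
    unfolding F2(4) by (rule sum.mono_neutral_cong_left) (use F1 F2 in auto)
  ultimately have "x + y = (\<Sum>u\<in>F1\<union>F2. c u *\<^sub>R u)"
    by (simp add: c_def scaleR_add_left sum.distrib)
  then show ?thesis unfolding conic_combinations_def
    using F1 F2 by (intro CollectI exI[of _ "F1 \<union> F2"] exI[of _ c]) (auto simp: c_def)
qed

lemma conic_combinations_sum:
  "finite I \<Longrightarrow> (\<And>i. i \<in> I \<Longrightarrow> f i \<in> conic_combinations U) \<Longrightarrow> sum f I \<in> conic_combinations U"
  by (induction I rule: finite_induct) (auto intro: conic_combinations_0 conic_combinations_add)

lemma conic_combinations_mono: "U \<subseteq> V \<Longrightarrow> conic_combinations U \<subseteq> conic_combinations V"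
  unfolding conic_combinations_def by blast

lemma convex_conic_combinations: "convex (conic_combinations U)"
  by (auto intro!: convexI conic_combinations_add conic_combinations_scaleR)

lemma cone_conic_combinations: "cone (conic_combinations U)"
  by (auto simp: cone_def intro!: conic_combinations_scaleR)

lemma conic_combinations_image_finite_support:
  assumes "x \<in> conic_combinations (f ` U)"
  obtains G where "finite G" "G \<subseteq> U" "x \<in> conic_combinations (f ` G)"
proof -
  obtain F c where F: "finite F" "F \<subseteq> f ` U" "\<forall>u\<in>F. c u \<ge> 0" "x = (\<Sum>u\<in>F. c u *\<^sub>R u)"
    using assms unfolding conic_combinations_def by blast
  obtain G where "finite G" "G \<subseteq> U" "F = f ` G" using finite_subset_image[OF F(1,2)] by blast
  then show ?thesis using F that unfolding conic_combinations_def by blast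
qed

lemma conic_combinations_finite_coeffs:
  assumes "finite U" "x \<in> conic_combinations U"
  obtains c where "\<And>u. u \<in> U \<Longrightarrow> c u \<ge> 0" "x = (\<Sum>u\<in>U. c u *\<^sub>R u)"
proof -
  obtain F c where F: "finite F" "F \<subseteq> U" "\<forall>u\<in>F. c u \<ge> 0" "x = (\<Sum>u\<in>F. c u *\<^sub>R u)"
    using assms(2) unfolding conic_combinations_def by blast
  have "x = (\<Sum>u\<in>U. (if u \<in> F then c u else 0) *\<^sub>R u)"
    unfolding F(4) by (rule sum.mono_neutral_cong_left) (use assms(1) F in auto)
  then show ?thesis using F(3) that[of "\<lambda>u. if u \<in> F then c u else 0"] by auto
qed

lemma rvec_add: "rvec (x + y) = rvec x + rvec y"
  by (simp add: rvec_def vec_eq_iff)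

lemma rvec_diff: "rvec (x - y) = rvec x - rvec y"
  by (simp add: rvec_def vec_eq_iff)

lemma rvec_0: "rvec 0 = 0"
  by (simp add: rvec_def vec_eq_iff)

lemma rvec_sum: "rvec (sum f I) = (\<Sum>i\<in>I. rvec (f i))"
  by (induction I rule: infinite_finite_induct) (auto simp: rvec_0 rvec_add)

lemma rvec_int_scale: "rvec (int_scale k x) = real_of_int k *\<^sub>R rvec x"
  by (simp add: rvec_def int_scale_def vec_eq_iff)

lemma inj_rvec: "inj rvec"
  by (auto simp: inj_def rvec_def vec_eq_iff)

lemma rvec_nth: "rvec x $ i = real_of_int (x $ i)"
  by (simp add: rvec_def)

lemma finite_lattice_points_in_cball: "finite {z::int^'n. norm (rvec z) \<le> R}"
proof -
  define N where "N = \<lceil>R\<rceil>"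
  have "z \<in> vec_lambda ` (PiE UNIV (\<lambda>_. {-N..N}))" if "norm (rvec z) \<le> R" for z :: "int^'n"
  proof -
    have "\<bar>z $ i\<bar> \<le> N" for i
      using component_le_norm_cart[of "rvec z" i] that unfolding N_def by (simp add: rvec_nth) linarith
    then have "z $ i \<in> {-N..N}" for i by (simp add: abs_le_iff) (meson minus_le_iff)
    then have "vec_nth z \<in> PiE UNIV (\<lambda>_. {-N..N})" by (simp add: PiE_UNIV_domain)
    then show ?thesis by (metis image_eqI vec_lambda_eta)
  qed
  then have "{z::int^'n. norm (rvec z) \<le> R} \<subseteq> vec_lambda ` (PiE UNIV (\<lambda>_. {-N..N}))"
    by blast
  moreover have "finite (vec_lambda ` (PiE UNIV (\<lambda>_. {-N..N})) :: (int^'n) set)"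
    by (intro finite_imageI finite_PiE) auto
  ultimately show ?thesis by (rule finite_subset)
qed

lemma is_semigroup_sum:
  assumes "is_semigroup S" "finite I" "\<And>i. i \<in> I \<Longrightarrow> f i \<in> S"
  shows "sum f I \<in> S"
  using assms(2,3) by (induction I rule: finite_induct) (use assms(1) in \<open>auto simp: is_semigroup_def\<close>)

lemma is_semigroup_int_scale:
  assumes "is_semigroup S" "x \<in> S"
  shows "int_scale (int n) x \<in> S"
proof (induction n)
  case 0
  have "int_scale (int 0) x = 0" by (simp add: int_scale_def vec_eq_iff)
  then show ?case using assms(1) by (simp add: is_semigroup_def)
next
  case (Suc n)
  have "int_scale (int (Suc n)) x = int_scale (int n) x + x"
    by (simp add: int_scale_def vec_eq_iff algebra_simps)
  then show ?case using Suc assms by (simp add: is_semigroup_def)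
qed

lemma obtain_difference_representation:
  assumes "{x - y | x y. x \<in> S \<and> y \<in> S} = UNIV"
  obtains f g where "\<And>r. f r \<in> S" "\<And>r. g r \<in> S" "\<And>r. r = f r - g r"
proof -
  have "\<forall>r. \<exists>x y. x \<in> S \<and> y \<in> S \<and> r = x - y"
    using assms by blast
  then show ?thesis using that by metis
qed

text \<open>Take \<open>s\<close> with the coefficients of \<open>z\<close> rounded down.\<close>
lemma conic_lattice_point_near_semigroup:
  assumes "is_semigroup S" "finite G" "G \<subseteq> S" "rvec z \<in> conic_combinations (rvec ` G)"
  obtains s where "s \<in> S" "norm (rvec (z - s)) \<le> (\<Sum>g\<in>G. norm (rvec g))"
proof -
  obtain c where c: "\<And>u. u \<in> rvec ` G \<Longrightarrow> c u \<ge> 0" "rvec z = (\<Sum>u\<in>rvec ` G. c u *\<^sub>R u)"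
    using conic_combinations_finite_coeffs[OF finite_imageI[OF assms(2)] assms(4)] by blast
  define d where "d g = c (rvec g)" for g
  have d: "d g \<ge> 0" if "g \<in> G" for g using c(1) that by (simp add: d_def)
  have z: "rvec z = (\<Sum>g\<in>G. d g *\<^sub>R rvec g)"
    unfolding c(2) d_def by (subst sum.reindex) (use inj_rvec in \<open>auto intro: inj_on_subset\<close>)
  define s where "s = (\<Sum>g\<in>G. int_scale (int (nat \<lfloor>d g\<rfloor>)) g)"
  have "s \<in> S"
    unfolding s_def using assms(1-3) by (intro is_semigroup_sum is_semigroup_int_scale) auto
  have "rvec s = (\<Sum>g\<in>G. real_of_int \<lfloor>d g\<rfloor> *\<^sub>R rvec g)"
    unfolding s_def rvec_sum rvec_int_scale by (rule sum.cong) (use d in auto)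
  then have "norm (rvec (z - s)) = norm (\<Sum>g\<in>G. (d g - real_of_int \<lfloor>d g\<rfloor>) *\<^sub>R rvec g)"
    unfolding rvec_diff z by (simp add: scaleR_diff_left sum_subtractf)
  also have "\<dots> \<le> (\<Sum>g\<in>G. norm ((d g - real_of_int \<lfloor>d g\<rfloor>) *\<^sub>R rvec g))"
    by (rule norm_sum)
  also have "\<dots> \<le> (\<Sum>g\<in>G. norm (rvec g))"
  proof (rule sum_mono)
    fix g
    have "0 \<le> d g - real_of_int \<lfloor>d g\<rfloor>" "d g - real_of_int \<lfloor>d g\<rfloor> \<le> 1" by linarith+
    then show "norm ((d g - real_of_int \<lfloor>d g\<rfloor>) *\<^sub>R rvec g) \<le> norm (rvec g)"
      by (simp add: mult_left_le_one_le)
  qed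
  finally show ?thesis using \<open>s \<in> S\<close> that by blast
qed

text \<open>The shift is the sum of the subtrahends of fixed representations \<open>r = f r - g r\<close> of
  the finitely many possible remainders \<open>r\<close>.\<close>
lemma semigroup_saturation:
  fixes S G :: "(int^'n) set"
  assumes "is_semigroup S" "{x - y | x y. x \<in> S \<and> y \<in> S} = UNIV" "finite G" "G \<subseteq> S"
  obtains w where "\<And>z. rvec z \<in> conic_combinations (rvec ` G) \<Longrightarrow> w + z \<in> S"
proof -
  obtain f g where fg: "\<And>r. f r \<in> S" "\<And>r. g r \<in> S" "\<And>r. r = f r - g r"
    using obtain_difference_representation[OF assms(2)] by blast
  define Rs where "Rs = {r::int^'n. norm (rvec r) \<le> (\<Sum>u\<in>G. norm (rvec u))}"
  have "finite Rs" unfolding Rs_def by (rule finite_lattice_points_in_cball)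
  define w where "w = (\<Sum>r\<in>Rs. g r)"
  have "w + z \<in> S" if z: "rvec z \<in> conic_combinations (rvec ` G)" for z
  proof -
    obtain s where s: "s \<in> S" "z - s \<in> Rs"
      using conic_lattice_point_near_semigroup[OF assms(1,3,4) z] unfolding Rs_def by auto
    have "w + z = s + f (z - s) + (\<Sum>r\<in>Rs - {z - s}. g r)"
      using fg(3)[of "z - s"] \<open>finite Rs\<close> s(2) unfolding w_def
      by (simp add: sum.remove algebra_simps)
    moreover have "(\<Sum>r\<in>Rs - {z - s}. g r) \<in> S"
      using assms(1) \<open>finite Rs\<close> fg(2) by (intro is_semigroup_sum) auto
    ultimately show ?thesis using s(1) fg(1) assms(1) by (simp add: is_semigroup_def)
  qed
  then show ?thesis using that by blast
qed

text \<open>With \<open>e\<^sub>i = x\<^sub>i - y\<^sub>i\<close> and \<open>v = \<Sum>(x\<^sub>i + y\<^sub>i)\<close> we get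
  \<open>v + y = \<Sum>((1 + y\<^sub>i) x\<^sub>i + (1 - y\<^sub>i) y\<^sub>i)\<close>.\<close>
lemma unit_box_in_conic_combinations:
  assumes "{x - y | x y. x \<in> S \<and> y \<in> S} = UNIV"
  obtains v where "(+) (rvec v) ` cbox 0 1 \<subseteq> conic_combinations (rvec ` S)"
proof -
  obtain f g where fg: "\<And>r. f r \<in> S" "\<And>r. g r \<in> S" "\<And>r. r = f r - g r"
    using obtain_difference_representation[OF assms] by blast
  define X where "X i = f (axis i 1)" for i
  define Y where "Y i = g (axis i 1)" for i
  have XY: "real_of_int (X i $ j) - real_of_int (Y i $ j) = (if j = i then 1 else 0)" for i j
  proof -
    have "X i $ j - Y i $ j = axis i (1::int) $ j"
      using fg(3)[of "axis i 1"] unfolding X_def Y_def by (metis vector_minus_component)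
    then show ?thesis by (simp add: axis_def flip: of_int_diff)
  qed
  define v where "v = (\<Sum>i\<in>UNIV. X i + Y i)"
  have "rvec v + y \<in> conic_combinations (rvec ` S)" if "y \<in> cbox 0 1" for y
  proof -
    have y: "\<forall>i. 0 \<le> y$i \<and> y$i \<le> 1" using that by (simp add: mem_box_cart)
    have eq: "rvec v + y = (\<Sum>i\<in>UNIV. (1 + y$i) *\<^sub>R rvec (X i) + (1 - y$i) *\<^sub>R rvec (Y i))"
    proof (subst vec_eq_iff, intro allI)
      fix j
      have "(\<Sum>i\<in>UNIV. (1 + y$i) *\<^sub>R rvec (X i) + (1 - y$i) *\<^sub>R rvec (Y i)) $ j
          = (\<Sum>i\<in>UNIV. (real_of_int (X i $ j) + real_of_int (Y i $ j))
              + y$i * (real_of_int (X i $ j) - real_of_int (Y i $ j)))"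
        by (simp add: rvec_nth algebra_simps)
      also have "\<dots> = (\<Sum>i\<in>UNIV. real_of_int (X i $ j) + real_of_int (Y i $ j))
            + (\<Sum>i\<in>UNIV. y$i * (real_of_int (X i $ j) - real_of_int (Y i $ j)))"
        by (rule sum.distrib)
      also have "\<dots> = (rvec v + y) $ j"
        by (simp add: XY v_def rvec_sum rvec_add rvec_nth if_distrib sum.delta cong: if_cong)
      finally show "(rvec v + y) $ j = (\<Sum>i\<in>UNIV. (1 + y$i) *\<^sub>R rvec (X i) + (1 - y$i) *\<^sub>R rvec (Y i)) $ j"
        by simp
    qed
    show ?thesis unfolding eq using y fg unfolding X_def Y_def
      by (intro conic_combinations_sum conic_combinations_add conic_combinations_scaleR
          conic_combinations_base) auto
  qed
  then show ?thesis using that by blast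
qed

definition grid_cube :: "real \<Rightarrow> int^'n \<Rightarrow> (real^'n) set" where
  "grid_cube q z = {x. \<forall>i. real_of_int (z$i) / q \<le> x$i \<and> x$i < (real_of_int (z$i) + 1) / q}"

lemma mem_grid_cube_iff:
  assumes "q > 0"
  shows "x \<in> grid_cube q z \<longleftrightarrow> (\<forall>i. real_of_int (z$i) \<le> q * x$i \<and> q * x$i < real_of_int (z$i) + 1)"
  using assms by (simp add: grid_cube_def pos_divide_le_eq pos_less_divide_eq mult.commute)

lemma grid_cube_floor: "q > 0 \<Longrightarrow> x \<in> grid_cube q (\<chi> i. \<lfloor>q * x$i\<rfloor>)"
  by (simp add: mem_grid_cube_iff)

lemma grid_cube_corner: "q > 0 \<Longrightarrow> (1/q) *\<^sub>R rvec z \<in> grid_cube q z"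
  by (simp add: mem_grid_cube_iff rvec_nth)

lemma grid_cube_eq_floor: "q > 0 \<Longrightarrow> x \<in> grid_cube q z \<Longrightarrow> z = (\<chi> i. \<lfloor>q * x$i\<rfloor>)"
  by (auto simp: mem_grid_cube_iff vec_eq_iff intro: floor_unique[symmetric])

lemma disjoint_family_grid_cube: "q > 0 \<Longrightarrow> disjoint_family (grid_cube q)"
  unfolding disjoint_family_on_def using grid_cube_eq_floor by blast

lemma grid_cube_param:
  assumes "q > 0" "x \<in> grid_cube q z"
  obtains y where "y \<in> cbox 0 1" "x = (1/q) *\<^sub>R (rvec z + y)"
proof
  show "q *\<^sub>R x - rvec z \<in> cbox 0 1"
    unfolding mem_box_cart
  proof
    fix i
    have "real_of_int (z$i) \<le> q * x$i" "q * x$i < real_of_int (z$i) + 1"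
      using assms by (simp_all add: mem_grid_cube_iff)
    then show "0 $ i \<le> (q *\<^sub>R x - rvec z) $ i \<and> (q *\<^sub>R x - rvec z) $ i \<le> 1 $ i"
      by (simp add: rvec_nth)
  qed
  show "x = (1/q) *\<^sub>R (rvec z + (q *\<^sub>R x - rvec z))" using assms(1) by simp
qed

lemma norm_diff_grid_cube_le:
  fixes x y :: "real^'n"
  assumes "q > 0" "x \<in> grid_cube q z" "y \<in> grid_cube q z"
  shows "norm (x - y) \<le> real CARD('n) / q"
proof -
  have h: "\<bar>(x - y) $ i\<bar> \<le> 1 / q" for i
  proof -
    have "real_of_int (z$i) / q \<le> x$i" "x$i < real_of_int (z$i) / q + 1 / q"
      "real_of_int (z$i) / q \<le> y$i" "y$i < real_of_int (z$i) / q + 1 / q"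
      using assms(2,3) by (auto simp: grid_cube_def add_divide_distrib)
    then show ?thesis by (simp only: vector_minus_component abs_le_iff) linarith
  qed
  have "(\<Sum>i\<in>UNIV. \<bar>(x - y) $ i\<bar>) \<le> (\<Sum>i\<in>(UNIV::'n set). 1 / q)" by (intro sum_mono h)
  then show ?thesis using norm_le_l1_cart[of "x - y"] by simp
qed

lemma norm_unit_box_le:
  fixes y :: "real^'n"
  assumes "y \<in> cbox 0 1"
  shows "norm y \<le> real CARD('n)"
proof -
  have "norm y \<le> (\<Sum>i\<in>UNIV. \<bar>y$i\<bar>)" by (rule norm_le_l1_cart)
  also have "\<dots> \<le> (\<Sum>i\<in>(UNIV::'n set). 1)" using assms by (intro sum_mono) (simp add: mem_box_cart)
  finally show ?thesis by simp
qed

lemma grid_cube_lmeasurable: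
  fixes z :: "int^'n"
  assumes "q > 0"
  shows "grid_cube q z \<in> lmeasurable" "measure lebesgue (grid_cube q z) = 1 / q ^ CARD('n)"
proof -
  define a :: "real^'n" where "a = (\<chi> i. real_of_int (z$i) / q)"
  define c :: "real^'n" where "c = (\<chi> i. (real_of_int (z$i) + 1) / q)"
  have sub: "box a c \<subseteq> grid_cube q z" "grid_cube q z \<subseteq> cbox a c"
    by (auto simp: mem_box_cart grid_cube_def a_def c_def less_imp_le)
  have "negligible (cbox a c - box a c)"
    using negligible_convex_frontier[of "cbox a c"] by (simp add: frontier_cbox)
  then have neg: "negligible (cbox a c - grid_cube q z)"
    by (rule negligible_subset) (use sub in auto)
  have "grid_cube q z = cbox a c - (cbox a c - grid_cube q z)" using sub by blast
  also have "\<dots> \<in> lmeasurable"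
    by (intro fmeasurable_Diff lmeasurable_cbox negligible_imp_sets neg)
  finally show "grid_cube q z \<in> lmeasurable" .
  have "measure lebesgue (grid_cube q z) = measure lebesgue (cbox a c)"
    by (rule measure_negligible_symdiff[OF lmeasurable_cbox]) (use neg sub in \<open>auto intro: negligible_subset\<close>)
  also have "\<dots> = (\<Prod>i\<in>UNIV. c$i - a$i)"
  proof -
    have "cbox a c \<noteq> {}" using sub grid_cube_corner[OF assms, of z] by blast
    then show ?thesis by (simp add: content_cbox_cart)
  qed
  also have "\<dots> = 1 / q ^ CARD('n)" by (simp add: a_def c_def add_divide_distrib power_one_over)
  finally show "measure lebesgue (grid_cube q z) = 1 / q ^ CARD('n)" .
qed

lemma grid_cubes_lmeasurable:
  fixes Z :: "(int^'n) set"
  assumes "q > 0" "finite Z"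
  shows "(\<Union>z\<in>Z. grid_cube q z) \<in> lmeasurable"
    "measure lebesgue (\<Union>z\<in>Z. grid_cube q z) = real (card Z) / q ^ CARD('n)"
proof -
  show "(\<Union>z\<in>Z. grid_cube q z) \<in> lmeasurable"
    using assms(2) by (induction Z rule: finite_induct) (auto intro: grid_cube_lmeasurable[OF assms(1)])
  have "measure lebesgue (\<Union>z\<in>Z. grid_cube q z) = (\<Sum>z\<in>Z. measure lebesgue (grid_cube q z))"
  proof (rule measure_finite_Union[OF assms(2)])
    show "disjoint_family_on (grid_cube q) Z"
      using disjoint_family_grid_cube[OF assms(1)] by (rule disjoint_family_on_mono[rotated]) simp
    show "grid_cube q ` Z \<subseteq> sets lebesgue"
      using grid_cube_lmeasurable(1)[OF assms(1)] by (auto intro: fmeasurableD)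
    show "emeasure lebesgue (grid_cube q z) \<noteq> \<infinity>" for z :: "int^'n"
      using fmeasurableD2[OF grid_cube_lmeasurable(1)[OF assms(1)]] by simp
  qed
  then show "measure lebesgue (\<Union>z\<in>Z. grid_cube q z) = real (card Z) / q ^ CARD('n)"
    by (simp add: grid_cube_lmeasurable(2)[OF assms(1)])
qed

lemma negligible_UN_countable:
  "countable I \<Longrightarrow> (\<And>i. i \<in> I \<Longrightarrow> negligible (f i)) \<Longrightarrow> negligible (\<Union>i\<in>I. f i)"
  by (rule negligible_countable_Union) auto

lemma sets_lebesgue_closed: "closed X \<Longrightarrow> (X :: 'a::euclidean_space set) \<in> sets lebesgue"
  by (metis borel_closed sets_completionI_sets sets_lborel)

lemma sets_lebesgue_open: "open X \<Longrightarrow> (X :: 'a::euclidean_space set) \<in> sets lebesgue"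
  by (metis borel_open sets_completionI_sets sets_lborel)

lemma eventually_measure_gt_of_eventually_covered:
  assumes "A \<in> fmeasurable M" "\<And>e. U e \<in> fmeasurable M"
    and "\<And>x. x \<in> A \<Longrightarrow> eventually (\<lambda>e. x \<in> U e) sequentially"
    and "a < measure M A"
  shows "eventually (\<lambda>e. a < measure M (U e)) sequentially"
proof -
  define W where "W N = A \<inter> (\<Inter>e\<in>{N..}. U e)" for N
  have W_sets: "W N \<in> sets M" for N
    unfolding W_def using assms(1,2) by (intro sets.Int sets.countable_INT') auto
  have UW: "(\<Union>N. W N) = A"
  proof
    show "A \<subseteq> (\<Union>N. W N)"
    proof
      fix x assume "x \<in> A"
      then obtain N where "\<forall>e\<ge>N. x \<in> U e"
        using assms(3) unfolding eventually_sequentially by blast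
      then show "x \<in> (\<Union>N. W N)" using \<open>x \<in> A\<close> by (auto simp: W_def)
    qed
  qed (auto simp: W_def)
  have "(\<lambda>N. measure M (W N)) \<longlonglongrightarrow> measure M A"
    unfolding UW[symmetric]
  proof (rule Lim_measure_incseq)
    show "range W \<subseteq> sets M" using W_sets by blast
    show "incseq W" by (auto simp: incseq_def W_def)
    show "emeasure M (\<Union>N. W N) \<noteq> \<infinity>" unfolding UW using fmeasurableD2[OF assms(1)] by simp
  qed
  then have "eventually (\<lambda>N. a < measure M (W N)) sequentially"
    using assms(4) by (rule order_tendstoD(1))
  then obtain N where N: "a < measure M (W N)"
    by (auto simp: eventually_sequentially)
  show ?thesis
  proof (rule eventually_sequentiallyI)
    fix e assume "N \<le> e"
    then have "measure M (W N) \<le> measure M (U e)"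
      using W_sets assms(2) by (intro measure_mono_fmeasurable) (auto simp: W_def)
    then show "a < measure M (U e)" using N by linarith
  qed
qed

lemma tendsto_const_divide_power:
  assumes "1 < p"
  shows "(\<lambda>e. c / real (p ^ e)) \<longlonglongrightarrow> 0"
proof -
  have "(\<lambda>e. c * (1 / real p) ^ e) \<longlonglongrightarrow> c * 0"
    using assms by (intro tendsto_mult tendsto_const LIMSEQ_power_zero) auto
  then show ?thesis by (simp add: power_one_over)
qed

section \<open>The truncated \<open>p\<close>-body\<close>

locale truncated_p_system =
  fixes p :: nat and S :: "(int^'n) set" and T :: "nat \<Rightarrow> (int^'n) set" and b :: "real^'n"
  assumes p_gt_1: "1 < p"
    and semigroup: "is_semigroup S"
    and differences: "{x - y | x y. x \<in> S \<and> y \<in> S} = UNIV"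
    and p_system: "p_system p S T"
    and inner_pos: "\<And>u. u \<in> cone_of (rvec ` S) \<Longrightarrow> u \<noteq> 0 \<Longrightarrow> inner u b > 0"
begin

abbreviation Cone :: "(real^'n) set" where "Cone \<equiv> cone_of (rvec ` S)"

abbreviation Cone\<^sub>0 :: "(real^'n) set" where "Cone\<^sub>0 \<equiv> conic_combinations (rvec ` S)"

definition halfspace :: "real \<Rightarrow> (real^'n) set" where
  "halfspace \<beta> = {u. inner u b < \<beta>}"

definition counted :: "nat \<Rightarrow> real \<Rightarrow> (int^'n) set" where
  "counted e \<beta> = {t \<in> T (p ^ e). rvec t \<in> (\<lambda>u. real (p ^ e) *\<^sub>R u) ` halfspace \<beta>}"

definition layer :: "nat \<Rightarrow> (real^'n) set" where
  "layer e = {(1 / real (p ^ e)) *\<^sub>R rvec t + c | t c. t \<in> T (p ^ e) \<and> c \<in> Cone}"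

lemma p_body_eq_UN_layer: "p_body p S T = (\<Union>e. layer e)"
  by (simp add: p_body_def layer_def)

lemma real_power_pos: "real (p ^ e) > 0"
  using p_gt_1 by simp

lemma Cone_eq_closure: "Cone = closure Cone\<^sub>0"
  by (rule cone_of_eq_closure)

lemma Cone\<^sub>0_subset_Cone: "Cone\<^sub>0 \<subseteq> Cone"
  unfolding Cone_eq_closure by (rule closure_subset)

lemma closed_Cone: "closed Cone"
  by (simp add: Cone_eq_closure)

lemma cone_Cone: "cone Cone"
  unfolding Cone_eq_closure by (intro cone_closure cone_conic_combinations)

lemma rvec_mem_Cone\<^sub>0: "s \<in> S \<Longrightarrow> rvec s \<in> Cone\<^sub>0"
  by (rule conic_combinations_base) simp

lemma inner_Cone_nonneg: "u \<in> Cone \<Longrightarrow> inner u b \<ge> 0"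
  using inner_pos[of u] by (cases "u = 0") auto

lemma b_nonzero: "b \<noteq> 0"
proof
  assume "b = 0"
  obtain x y where "x \<in> S" "y \<in> S" "1 = x - y" using differences by blast
  moreover have "(1::int^'n) \<noteq> 0" by (simp add: vec_eq_iff)
  ultimately have "rvec x \<noteq> 0 \<or> rvec y \<noteq> 0" using inj_rvec rvec_0 by (metis diff_self injD)
  then show False
    using inner_pos \<open>x \<in> S\<close> \<open>y \<in> S\<close> \<open>b = 0\<close> Cone\<^sub>0_subset_Cone rvec_mem_Cone\<^sub>0 by fastforce
qed

text \<open>Pointedness made uniform: \<open>inner u b\<close> attains a positive minimum on the compact set of unit
  vectors of the closed cone.\<close>
lemma Cone_inner_ge_norm: "\<exists>\<delta>>0. \<forall>u\<in>Cone. \<delta> * norm u \<le> inner u b"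
proof -
  have unit: "(1 / norm u) *\<^sub>R u \<in> Cone \<inter> sphere 0 1" if "u \<in> Cone" "u \<noteq> 0" for u
    using that cone_Cone by (simp add: cone_def)
  show ?thesis
  proof (cases "Cone \<inter> sphere 0 1 = {}")
    case True
    then have "u = 0" if "u \<in> Cone" for u using unit that by blast
    then show ?thesis by (intro exI[of _ 1]) fastforce
  next
    case False
    have "compact (Cone \<inter> sphere 0 1)" by (intro closed_Int_compact closed_Cone compact_sphere)
    then have "\<exists>u0\<in>Cone \<inter> sphere 0 1. \<forall>u\<in>Cone \<inter> sphere 0 1. inner u0 b \<le> inner u b"
      by (rule continuous_attains_inf[OF _ False]) (intro continuous_intros)
    then obtain u0 where u0: "u0 \<in> Cone \<inter> sphere 0 1"
      "\<And>u. u \<in> Cone \<inter> sphere 0 1 \<Longrightarrow> inner u0 b \<le> inner u b"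
      by blast
    have "u0 \<noteq> 0" using u0(1) by auto
    then have "inner u0 b > 0" using u0(1) inner_pos by blast
    moreover have "inner u0 b * norm u \<le> inner u b" if "u \<in> Cone" for u
    proof (cases "u = 0")
      case False
      then have "inner u0 b \<le> inner u b / norm u" using u0(2)[OF unit[OF that False]] by simp
      then show ?thesis using False by (simp add: le_divide_eq)
    qed simp
    ultimately show ?thesis by blast
  qed
qed

lemma T_subset: "T (p ^ e) \<subseteq> S"
  using p_system unfolding p_system_def is_ideal_def by blast

lemma T_add: "s \<in> S \<Longrightarrow> t \<in> T (p ^ e) \<Longrightarrow> s + t \<in> T (p ^ e)"
  using p_system unfolding p_system_def is_ideal_def by blast

lemma T_int_scale_power: "t \<in> T (p ^ e) \<Longrightarrow> int_scale (int (p ^ k)) t \<in> T (p ^ (e + k))"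
proof (induction k)
  case 0
  then show ?case by (simp add: int_scale_def vec_eq_iff)
next
  case (Suc k)
  have "int_scale (int (p ^ Suc k)) t = int_scale (int p) (int_scale (int (p ^ k)) t)"
    by (simp add: int_scale_def vec_eq_iff mult.assoc)
  then show ?case using p_system Suc unfolding p_system_def by auto
qed

lemma scaleR_rvec_int_scale_power:
  assumes "e0 \<le> e"
  shows "real (p ^ e) *\<^sub>R ((1 / real (p ^ e0)) *\<^sub>R rvec t) = rvec (int_scale (int (p ^ (e - e0))) t)"
proof -
  have "real (p ^ e) = real (p ^ e0) * real (p ^ (e - e0))"
    using assms by (simp flip: power_add)
  then show ?thesis using real_power_pos[of e0] by (simp add: rvec_int_scale)
qed

lemma scaled_T_mem_Cone\<^sub>0: "t \<in> T (p ^ e) \<Longrightarrow> (1 / real (p ^ e)) *\<^sub>R rvec t \<in> Cone\<^sub>0"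
  using T_subset by (intro conic_combinations_scaleR rvec_mem_Cone\<^sub>0) auto

lemma layer_eq_UN: "layer e = (\<Union>t\<in>T (p ^ e). (+) ((1 / real (p ^ e)) *\<^sub>R rvec t) ` Cone)"
  unfolding layer_def by auto

lemma sets_layer: "layer e \<in> sets lebesgue"
proof -
  have "closed ((+) a ` Cone)" for a by (rule closed_translation[OF closed_Cone])
  then show ?thesis unfolding layer_eq_UN by (intro sets.countable_UN' sets_lebesgue_closed) auto
qed

lemma sets_p_body: "p_body p S T \<in> sets lebesgue"
  unfolding p_body_eq_UN_layer using sets_layer by (intro sets.countable_UN) auto

lemma bounded_p_body_Int: "bounded (p_body p S T \<inter> {u. inner u b \<le> \<beta>})"
proof -
  obtain \<delta> where \<delta>: "\<delta> > 0" "\<And>u. u \<in> Cone \<Longrightarrow> \<delta> * norm u \<le> inner u b"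
    using Cone_inner_ge_norm by blast
  have "norm u \<le> \<beta> / \<delta>" if "u \<in> Cone" "inner u b \<le> \<beta>" for u
    using \<delta>(2)[OF that(1)] that(2) \<delta>(1) by (simp add: pos_le_divide_eq mult.commute)
  moreover have "\<exists>a c. x = a + c \<and> a \<in> Cone \<and> c \<in> Cone" if "x \<in> p_body p S T" for x
    using that scaled_T_mem_Cone\<^sub>0 Cone\<^sub>0_subset_Cone unfolding p_body_eq_UN_layer layer_def by blast
  ultimately have "norm x \<le> 2 * (\<beta> / \<delta>)" if "x \<in> p_body p S T" "inner x b \<le> \<beta>" for x
    using that inner_Cone_nonneg norm_triangle_ineq
    by (smt (verit, ccfv_SIG) inner_add_left)
  then show ?thesis unfolding bounded_iff by blast
qed

lemma open_halfspace: "open (halfspace \<beta>)"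
  using open_halfspace_lt[of b \<beta>] by (simp add: halfspace_def inner_commute)

lemma halfspace_mono: "\<beta> \<le> \<gamma> \<Longrightarrow> halfspace \<beta> \<subseteq> halfspace \<gamma>"
  by (auto simp: halfspace_def)

lemma p_body_halfspace_lmeasurable: "p_body p S T \<inter> halfspace \<beta> \<in> lmeasurable"
proof (rule bounded_set_imp_lmeasurable)
  show "bounded (p_body p S T \<inter> halfspace \<beta>)"
    by (rule bounded_subset[OF bounded_p_body_Int[of \<beta>]]) (auto simp: halfspace_def)
  show "p_body p S T \<inter> halfspace \<beta> \<in> sets lebesgue"
    by (intro sets.Int sets_p_body sets_lebesgue_open open_halfspace)
qed

lemma mem_counted_iff:
  "t \<in> counted e \<beta> \<longleftrightarrow> t \<in> T (p ^ e) \<and> (1 / real (p ^ e)) *\<^sub>R rvec t \<in> halfspace \<beta>"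
proof -
  have q: "real (p ^ e) \<noteq> 0" using real_power_pos[of e] by simp
  have "rvec t \<in> (\<lambda>u. real (p ^ e) *\<^sub>R u) ` halfspace \<beta> \<longleftrightarrow> (1 / real (p ^ e)) *\<^sub>R rvec t \<in> halfspace \<beta>"
  proof
    assume "rvec t \<in> (\<lambda>u. real (p ^ e) *\<^sub>R u) ` halfspace \<beta>"
    then show "(1 / real (p ^ e)) *\<^sub>R rvec t \<in> halfspace \<beta>" using q by auto
  next
    assume "(1 / real (p ^ e)) *\<^sub>R rvec t \<in> halfspace \<beta>"
    moreover have "rvec t = real (p ^ e) *\<^sub>R ((1 / real (p ^ e)) *\<^sub>R rvec t)" using p_gt_1 by simp
    ultimately show "rvec t \<in> (\<lambda>u. real (p ^ e) *\<^sub>R u) ` halfspace \<beta>" by blast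
  qed
  then show ?thesis by (simp add: counted_def)
qed

lemma finite_counted: "finite (counted e \<beta>)"
proof -
  obtain \<delta> where \<delta>: "\<delta> > 0" "\<And>u. u \<in> Cone \<Longrightarrow> \<delta> * norm u \<le> inner u b"
    using Cone_inner_ge_norm by blast
  have "norm (rvec t) \<le> real (p ^ e) * (\<beta> / \<delta>)" if "t \<in> counted e \<beta>" for t
  proof -
    define u where "u = (1 / real (p ^ e)) *\<^sub>R rvec t"
    have "u \<in> Cone" "inner u b < \<beta>"
      using that scaled_T_mem_Cone\<^sub>0 Cone\<^sub>0_subset_Cone
      unfolding mem_counted_iff halfspace_def u_def by auto
    then have "norm u \<le> \<beta> / \<delta>"
      using \<delta> by (smt (verit, best) pos_le_divide_eq mult.commute)
    then show ?thesis
      using real_power_pos[of e] unfolding u_def by (simp add: divide_le_eq mult.commute)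
  qed
  then show ?thesis
    by (intro finite_subset[OF _ finite_lattice_points_in_cball]) auto
qed

section \<open>Upper bound\<close>

lemma grid_cube_shift_subset:
  assumes v: "(+) (rvec v) ` cbox 0 1 \<subseteq> Cone\<^sub>0"
    and t: "t \<in> counted e \<alpha>"
  shows "grid_cube (real (p ^ e)) (t + v)
    \<subseteq> p_body p S T \<inter> halfspace (\<alpha> + (norm (rvec v) + real CARD('n)) * norm b / real (p ^ e))"
proof
  define q where "q = real (p ^ e)"
  have q: "q > 0" unfolding q_def by (rule real_power_pos)
  fix x assume "x \<in> grid_cube (real (p ^ e)) (t + v)"
  then obtain y where y: "y \<in> cbox 0 1" "x = (1/q) *\<^sub>R (rvec (t + v) + y)"
    using grid_cube_param[OF q] unfolding q_def by blast
  define c where "c = (1/q) *\<^sub>R (rvec v + y)"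
  have x: "x = (1/q) *\<^sub>R rvec t + c" unfolding y(2) c_def rvec_add by (simp add: algebra_simps)
  have "c \<in> Cone"
    using conic_combinations_scaleR[of "rvec v + y" _ "1/q"] v y(1) q Cone\<^sub>0_subset_Cone
    unfolding c_def by auto
  then have "x \<in> p_body p S T"
    using t x unfolding p_body_eq_UN_layer layer_def mem_counted_iff q_def by blast
  have "inner (rvec v + y) b \<le> norm (rvec v + y) * norm b" by (rule norm_cauchy_schwarz)
  also have "\<dots> \<le> (norm (rvec v) + real CARD('n)) * norm b"
    using norm_triangle_ineq[of "rvec v" y] norm_unit_box_le[OF y(1)] by (intro mult_right_mono) auto
  finally have "(1/q) * inner (rvec v + y) b \<le> (norm (rvec v) + real CARD('n)) * norm b / q"
    using q by (simp add: divide_right_mono)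
  moreover have "inner x b = inner ((1/q) *\<^sub>R rvec t) b + (1/q) * inner (rvec v + y) b"
    unfolding x c_def by (simp add: inner_add_left)
  moreover have "inner ((1/q) *\<^sub>R rvec t) b < \<alpha>"
    using t unfolding mem_counted_iff halfspace_def q_def by simp
  ultimately show "x \<in> p_body p S T \<inter> halfspace (\<alpha> + (norm (rvec v) + real CARD('n)) * norm b / q)"
    using \<open>x \<in> p_body p S T\<close> by (simp add: halfspace_def)
qed

lemma card_counted_le_measure:
  assumes v: "(+) (rvec v) ` cbox 0 1 \<subseteq> Cone\<^sub>0"
  shows "real (card (counted e \<alpha>)) / real (p ^ e) ^ CARD('n)
    \<le> measure lebesgue (p_body p S T \<inter> halfspace (\<alpha> + (norm (rvec v) + real CARD('n)) * norm b / real (p ^ e)))"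
proof -
  define Z where "Z = (\<lambda>t. t + v) ` counted e \<alpha>"
  have "finite Z" unfolding Z_def using finite_counted by simp
  have "card Z = card (counted e \<alpha>)" unfolding Z_def by (rule card_image) (simp add: inj_on_def)
  then have "real (card (counted e \<alpha>)) / real (p ^ e) ^ CARD('n)
      = measure lebesgue (\<Union>z\<in>Z. grid_cube (real (p ^ e)) z)"
    using grid_cubes_lmeasurable(2)[OF real_power_pos \<open>finite Z\<close>] by simp
  also have "\<dots> \<le> measure lebesgue (p_body p S T \<inter> halfspace (\<alpha> + (norm (rvec v) + real CARD('n)) * norm b / real (p ^ e)))"
  proof (rule measure_mono_fmeasurable[OF _ _ p_body_halfspace_lmeasurable])
    show "(\<Union>z\<in>Z. grid_cube (real (p ^ e)) z)
        \<subseteq> p_body p S T \<inter> halfspace (\<alpha> + (norm (rvec v) + real CARD('n)) * norm b / real (p ^ e))"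
      using grid_cube_shift_subset[OF v] unfolding Z_def by blast
    show "(\<Union>z\<in>Z. grid_cube (real (p ^ e)) z) \<in> sets lebesgue"
      using grid_cubes_lmeasurable(1)[OF real_power_pos \<open>finite Z\<close>] by (rule fmeasurableD)
  qed
  finally show ?thesis .
qed

lemma measure_p_body_halfspace_shrink:
  assumes "measure lebesgue (p_body p S T \<inter> halfspace \<alpha>) < a"
  shows "\<exists>\<delta>>0. measure lebesgue (p_body p S T \<inter> halfspace (\<alpha> + \<delta>)) < a"
proof -
  define A where "A n = p_body p S T \<inter> halfspace (\<alpha> + 1 / real (Suc n))" for n
  have "decseq A" unfolding decseq_Suc_iff A_def
    by (intro allI Int_mono order_refl halfspace_mono) (simp add: frac_le)
  moreover have A: "A n \<in> lmeasurable" for n unfolding A_def by (rule p_body_halfspace_lmeasurable)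
  moreover have "emeasure lebesgue (A n) \<noteq> \<infinity>" for n using fmeasurableD2[OF A] by simp
  ultimately have "(\<lambda>n. measure lebesgue (A n)) \<longlonglongrightarrow> measure lebesgue (\<Inter>n. A n)"
    by (intro Lim_measure_decseq) (auto intro: fmeasurableD)
  moreover have "measure lebesgue (\<Inter>n. A n) = measure lebesgue (p_body p S T \<inter> halfspace \<alpha>)"
  proof (rule measure_negligible_symdiff[OF p_body_halfspace_lmeasurable])
    have "p_body p S T \<inter> halfspace \<alpha> \<subseteq> (\<Inter>n. A n)"
      unfolding A_def by (intro INT_greatest Int_mono order_refl halfspace_mono) simp
    moreover have "inner b x = \<alpha>" if "x \<in> (\<Inter>n. A n) - p_body p S T \<inter> halfspace \<alpha>" for x
    proof (rule ccontr)
      assume "inner b x \<noteq> \<alpha>"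
      then have "inner x b \<noteq> \<alpha>" by (simp add: inner_commute)
      moreover have "\<not> inner x b < \<alpha>" using that by (auto simp: A_def halfspace_def)
      ultimately obtain n where "inverse (real (Suc n)) < inner x b - \<alpha>"
        using reals_Archimedean[of "inner x b - \<alpha>"] by auto
      moreover have "x \<in> A n" using that by blast
      ultimately show False by (simp add: A_def halfspace_def inverse_eq_divide)
    qed
    ultimately have "p_body p S T \<inter> halfspace \<alpha> - (\<Inter>n. A n) \<union> ((\<Inter>n. A n) - p_body p S T \<inter> halfspace \<alpha>)
        \<subseteq> {u. inner b u = \<alpha>}"
      by blast
    then show "negligible (p_body p S T \<inter> halfspace \<alpha> - (\<Inter>n. A n) \<union> ((\<Inter>n. A n) - p_body p S T \<inter> halfspace \<alpha>))"
      using negligible_hyperplane[of b \<alpha>] b_nonzero negligible_subset by blast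
  qed
  ultimately have "eventually (\<lambda>n. measure lebesgue (A n) < a) sequentially"
    using assms by (simp add: order_tendstoD(2))
  then obtain n where "measure lebesgue (A n) < a" by (auto simp: eventually_sequentially)
  then show ?thesis unfolding A_def by (intro exI[of _ "1 / real (Suc n)"]) auto
qed

lemma eventually_counted_less:
  assumes "measure lebesgue (p_body p S T \<inter> halfspace \<alpha>) < a"
  shows "eventually (\<lambda>e. real (card (counted e \<alpha>)) / real (p ^ e) ^ CARD('n) < a) sequentially"
proof -
  obtain v where v: "(+) (rvec v) ` cbox 0 1 \<subseteq> Cone\<^sub>0"
    using unit_box_in_conic_combinations[OF differences] by blast
  define M where "M = (norm (rvec v) + real CARD('n)) * norm b"
  obtain \<delta> where \<delta>: "\<delta> > 0" "measure lebesgue (p_body p S T \<inter> halfspace (\<alpha> + \<delta>)) < a"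
    using measure_p_body_halfspace_shrink[OF assms] by blast
  have "eventually (\<lambda>e. M / real (p ^ e) < \<delta>) sequentially"
    using order_tendstoD(2)[OF tendsto_const_divide_power[OF p_gt_1] \<delta>(1)] .
  then show ?thesis
  proof (rule eventually_mono)
    fix e assume "M / real (p ^ e) < \<delta>"
    then have "measure lebesgue (p_body p S T \<inter> halfspace (\<alpha> + M / real (p ^ e)))
        \<le> measure lebesgue (p_body p S T \<inter> halfspace (\<alpha> + \<delta>))"
      using p_body_halfspace_lmeasurable
      by (intro measure_mono_fmeasurable Int_mono order_refl halfspace_mono) (auto intro: fmeasurableD)
    then show "real (card (counted e \<alpha>)) / real (p ^ e) ^ CARD('n) < a"
      using card_counted_le_measure[OF v, of e \<alpha>] \<delta>(2) unfolding M_def by linarith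
  qed
qed

section \<open>Lower bound\<close>

text \<open>An open inner approximation of the truncated body, which it exhausts up to the null set
  \<open>cone_frontiers\<close> below.\<close>
definition core :: "real \<Rightarrow> (real^'n) set" where
  "core \<alpha> = halfspace \<alpha> \<inter> (\<Union>e. \<Union>t\<in>T (p ^ e). \<Union>G\<in>{G. finite G \<and> G \<subseteq> S}.
     (+) ((1 / real (p ^ e)) *\<^sub>R rvec t) ` interior (conic_combinations (rvec ` G)))"

lemma open_core: "open (core \<alpha>)"
  unfolding core_def by (intro open_Int open_halfspace open_UN ballI open_translation open_interior)

lemma core_subset: "core \<alpha> \<subseteq> p_body p S T \<inter> halfspace \<alpha>"
proof -
  have "interior (conic_combinations (rvec ` G)) \<subseteq> Cone" if "G \<subseteq> S" for G
    using interior_subset conic_combinations_mono[OF image_mono[OF that]] Cone\<^sub>0_subset_Cone by blast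
  then show ?thesis
    unfolding core_def p_body_eq_UN_layer layer_def by blast
qed

lemma core_lmeasurable: "core \<alpha> \<in> lmeasurable"
proof (rule lmeasurable_open[OF _ open_core])
  have "core \<alpha> \<subseteq> p_body p S T \<inter> {u. inner u b \<le> \<alpha>}"
    using core_subset[of \<alpha>] by (auto simp: halfspace_def)
  then show "bounded (core \<alpha>)" by (rule bounded_subset[OF bounded_p_body_Int])
qed

definition cone_frontiers :: "(real^'n) set" where
  "cone_frontiers = (\<Union>(e, t, G)\<in>UNIV \<times> (UNIV :: (int^'n) set) \<times> insert S {G. finite G \<and> G \<subseteq> S}.
     (+) ((1 / real (p ^ e)) *\<^sub>R rvec t) ` frontier (conic_combinations (rvec ` G)))"

lemma negligible_cone_frontiers: "negligible cone_frontiers"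
proof -
  have "countable (insert S {G. finite G \<and> G \<subseteq> S})"
    by (intro countable_insert countable_Collect_finite_subset countableI_type)
  then show ?thesis
    unfolding cone_frontiers_def
    by (intro negligible_UN_countable countable_SIGMA countableI_type)
      (auto intro!: negligible_translation negligible_convex_frontier convex_conic_combinations)
qed

lemma p_body_diff_core_subset: "p_body p S T \<inter> halfspace \<alpha> - core \<alpha> \<subseteq> cone_frontiers"
proof
  fix x assume x: "x \<in> p_body p S T \<inter> halfspace \<alpha> - core \<alpha>"
  then obtain e t c where t: "t \<in> T (p ^ e)" "c \<in> Cone" "x = (1 / real (p ^ e)) *\<^sub>R rvec t + c"
    unfolding p_body_eq_UN_layer layer_def by blast
  have "\<exists>G\<in>insert S {G. finite G \<and> G \<subseteq> S}. c \<in> frontier (conic_combinations (rvec ` G))"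
  proof (cases "c \<in> Cone\<^sub>0")
    case True
    then obtain G where G: "finite G" "G \<subseteq> S" "c \<in> conic_combinations (rvec ` G)"
      by (rule conic_combinations_image_finite_support)
    have "c \<notin> interior (conic_combinations (rvec ` G))"
    proof
      assume "c \<in> interior (conic_combinations (rvec ` G))"
      then have "x \<in> core \<alpha>" using x t(1,3) G(1,2) unfolding core_def by blast
      then show False using x by blast
    qed
    then show ?thesis using G closure_subset unfolding frontier_def by blast
  next
    case False
    then show ?thesis using t(2) interior_subset unfolding frontier_def Cone_eq_closure by blast
  qed
  then show "x \<in> cone_frontiers" unfolding cone_frontiers_def using t(3) by blast
qed

lemma measure_core: "measure lebesgue (core \<alpha>) = measure lebesgue (p_body p S T \<inter> halfspace \<alpha>)"
proof (rule measure_negligible_symdiff[OF core_lmeasurable, symmetric])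
  have "core \<alpha> - p_body p S T \<inter> halfspace \<alpha> \<union> (p_body p S T \<inter> halfspace \<alpha> - core \<alpha>) \<subseteq> cone_frontiers"
    using core_subset p_body_diff_core_subset by blast
  then show "negligible (core \<alpha> - p_body p S T \<inter> halfspace \<alpha> \<union> (p_body p S T \<inter> halfspace \<alpha> - core \<alpha>))"
    using negligible_cone_frontiers negligible_subset by blast
qed

definition good_cubes :: "nat \<Rightarrow> real \<Rightarrow> (real^'n) set" where
  "good_cubes e \<alpha> = (\<Union>z\<in>{z \<in> T (p ^ e). grid_cube (real (p ^ e)) z \<subseteq> halfspace \<alpha>}.
     grid_cube (real (p ^ e)) z)"

lemma good_cubes_index_subset: "{z \<in> T (p ^ e). grid_cube (real (p ^ e)) z \<subseteq> halfspace \<alpha>} \<subseteq> counted e \<alpha>"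
proof
  fix z assume "z \<in> {z \<in> T (p ^ e). grid_cube (real (p ^ e)) z \<subseteq> halfspace \<alpha>}"
  moreover have "(1 / real (p ^ e)) *\<^sub>R rvec z \<in> grid_cube (real (p ^ e)) z"
    by (rule grid_cube_corner[OF real_power_pos])
  ultimately show "z \<in> counted e \<alpha>" unfolding mem_counted_iff by blast
qed

lemma good_cubes_lmeasurable:
  shows "good_cubes e \<alpha> \<in> lmeasurable"
    and "measure lebesgue (good_cubes e \<alpha>) \<le> real (card (counted e \<alpha>)) / real (p ^ e) ^ CARD('n)"
proof -
  define Z where "Z = {z \<in> T (p ^ e). grid_cube (real (p ^ e)) z \<subseteq> halfspace \<alpha>}"
  have Z: "Z \<subseteq> counted e \<alpha>" unfolding Z_def by (rule good_cubes_index_subset)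
  then have "finite Z" using finite_counted finite_subset by blast
  have U: "good_cubes e \<alpha> = (\<Union>z\<in>Z. grid_cube (real (p ^ e)) z)"
    unfolding good_cubes_def Z_def ..
  show "good_cubes e \<alpha> \<in> lmeasurable"
    unfolding U by (rule grid_cubes_lmeasurable(1)[OF real_power_pos \<open>finite Z\<close>])
  have "measure lebesgue (good_cubes e \<alpha>) = real (card Z) / real (p ^ e) ^ CARD('n)"
    unfolding U by (rule grid_cubes_lmeasurable(2)[OF real_power_pos \<open>finite Z\<close>])
  also have "\<dots> \<le> real (card (counted e \<alpha>)) / real (p ^ e) ^ CARD('n)"
    using card_mono[OF finite_counted Z] by (simp add: divide_right_mono)
  finally show "measure lebesgue (good_cubes e \<alpha>) \<le> real (card (counted e \<alpha>)) / real (p ^ e) ^ CARD('n)" .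
qed

lemma lattice_point_mem_T:
  assumes "t \<in> T (p ^ e0)" "e0 \<le> e" "\<And>y. rvec y \<in> K \<Longrightarrow> w + y \<in> S"
    and "rvec z - real (p ^ e) *\<^sub>R ((1 / real (p ^ e0)) *\<^sub>R rvec t) - rvec w \<in> K"
  shows "z \<in> T (p ^ e)"
proof -
  define t' where "t' = int_scale (int (p ^ (e - e0))) t"
  have "t' \<in> T (p ^ e)"
    using T_int_scale_power[OF assms(1), of "e - e0"] assms(2) by (simp add: t'_def)
  moreover have "rvec (z - t' - w) = rvec z - real (p ^ e) *\<^sub>R ((1 / real (p ^ e0)) *\<^sub>R rvec t) - rvec w"
    unfolding t'_def rvec_diff scaleR_rvec_int_scale_power[OF assms(2)] ..
  then have "w + (z - t' - w) \<in> S" using assms(3,4) by presburger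
  ultimately show ?thesis using T_add by fastforce
qed

lemma floor_grid_cube_good:
  assumes t: "t \<in> T (p ^ e0)" "e0 \<le> e"
    and K: "cone K" "\<And>y. rvec y \<in> K \<Longrightarrow> w + y \<in> S"
    and r1: "ball (x - (1 / real (p ^ e0)) *\<^sub>R rvec t) r1 \<subseteq> K"
    and r2: "ball x r2 \<subseteq> halfspace \<alpha>"
    and small: "(real CARD('n) + norm (rvec w)) / real (p ^ e) < min r1 r2"
  shows "x \<in> good_cubes e \<alpha>"
proof -
  define q where "q = real (p ^ e)"
  have q: "q > 0" unfolding q_def by (rule real_power_pos)
  define z where "z = (\<chi> i. \<lfloor>q * x$i\<rfloor>)"
  have xz: "x \<in> grid_cube q z" unfolding z_def by (rule grid_cube_floor[OF q])
  have "real CARD('n) / q + norm (rvec w) / q < min r1 r2" "norm (rvec w) / q \<ge> 0"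
    using small q by (simp_all add: q_def add_divide_distrib)
  then have near: "norm (x - y) < min r1 r2 - norm (rvec w) / q" "dist x y < r2"
    if "y \<in> grid_cube q z" for y
    using norm_diff_grid_cube_le[OF q xz that] by (auto simp: dist_norm)
  have "grid_cube q z \<subseteq> halfspace \<alpha>" using near(2) r2 by auto
  moreover have "z \<in> T (p ^ e)"
  proof (rule lattice_point_mem_T[OF t K(2)])
    define c' where "c' = (1/q) *\<^sub>R rvec z - (1 / real (p ^ e0)) *\<^sub>R rvec t - (1/q) *\<^sub>R rvec w"
    have "norm ((x - (1 / real (p ^ e0)) *\<^sub>R rvec t) - c')
        \<le> norm (x - (1/q) *\<^sub>R rvec z) + norm (rvec w) / q"
      using norm_triangle_ineq[of "x - (1/q) *\<^sub>R rvec z" "(1/q) *\<^sub>R rvec w"] q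
      by (simp add: c'_def algebra_simps)
    then have "c' \<in> K"
      using near(1)[OF grid_cube_corner[OF q]] r1 by (auto simp: dist_norm)
    then have "q *\<^sub>R c' \<in> K" using K(1) q by (simp add: cone_def)
    moreover have "q *\<^sub>R c' = rvec z - q *\<^sub>R ((1 / real (p ^ e0)) *\<^sub>R rvec t) - rvec w"
      using q by (simp add: c'_def algebra_simps)
    ultimately show "rvec z - real (p ^ e) *\<^sub>R ((1 / real (p ^ e0)) *\<^sub>R rvec t) - rvec w \<in> K"
      unfolding q_def by simp
  qed
  ultimately show ?thesis using xz unfolding good_cubes_def q_def by blast
qed

lemma core_eventually_good_cubes:
  assumes "x \<in> core \<alpha>"
  shows "eventually (\<lambda>e. x \<in> good_cubes e \<alpha>) sequentially"
proof -
  obtain e0 t G where x: "x \<in> halfspace \<alpha>" and t: "t \<in> T (p ^ e0)" and G: "finite G" "G \<subseteq> S"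
    and c: "x - (1 / real (p ^ e0)) *\<^sub>R rvec t \<in> interior (conic_combinations (rvec ` G))"
    using assms unfolding core_def by force
  obtain w where w: "\<And>y. rvec y \<in> conic_combinations (rvec ` G) \<Longrightarrow> w + y \<in> S"
    using semigroup_saturation[OF semigroup differences G] by blast
  obtain r1 where r1: "r1 > 0" "ball (x - (1 / real (p ^ e0)) *\<^sub>R rvec t) r1 \<subseteq> conic_combinations (rvec ` G)"
    using c mem_interior by blast
  obtain r2 where r2: "r2 > 0" "ball x r2 \<subseteq> halfspace \<alpha>"
    using x open_halfspace open_contains_ball by blast
  have "eventually (\<lambda>e. e0 \<le> e \<and> (real CARD('n) + norm (rvec w)) / real (p ^ e) < min r1 r2) sequentially"
    using r1(1) r2(1)
    by (intro eventually_conj eventually_ge_at_top order_tendstoD(2)[OF tendsto_const_divide_power[OF p_gt_1]]) simp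
  then show ?thesis
    by (rule eventually_mono)
      (use floor_grid_cube_good[OF t _ cone_conic_combinations w r1(2) r2(2)] in blast)
qed

lemma eventually_less_counted:
  assumes "a < measure lebesgue (p_body p S T \<inter> halfspace \<alpha>)"
  shows "eventually (\<lambda>e. a < real (card (counted e \<alpha>)) / real (p ^ e) ^ CARD('n)) sequentially"
proof -
  have "eventually (\<lambda>e. a < measure lebesgue (good_cubes e \<alpha>)) sequentially"
    by (rule eventually_measure_gt_of_eventually_covered[OF core_lmeasurable good_cubes_lmeasurable(1)
          core_eventually_good_cubes]) (use assms in \<open>simp_all add: measure_core\<close>)
  then show ?thesis
    by (rule eventually_mono) (meson good_cubes_lmeasurable(2) less_le_trans)
qed

lemma tendsto_counted:
  "(\<lambda>e. real (card (counted e \<alpha>)) / real (p ^ e) ^ CARD('n))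
     \<longlonglongrightarrow> measure lebesgue (p_body p S T \<inter> halfspace \<alpha>)"
proof (rule order_tendstoI)
  show "eventually (\<lambda>e. a < real (card (counted e \<alpha>)) / real (p ^ e) ^ CARD('n)) sequentially"
    if "a < measure lebesgue (p_body p S T \<inter> halfspace \<alpha>)" for a
    using that by (rule eventually_less_counted)
  show "eventually (\<lambda>e. real (card (counted e \<alpha>)) / real (p ^ e) ^ CARD('n) < a) sequentially"
    if "measure lebesgue (p_body p S T \<inter> halfspace \<alpha>) < a" for a
    using that by (rule eventually_counted_less)
qed

end

theorem mainTheorem6:
  fixes p :: nat and S :: "(int^'n) set" and T :: "nat \<Rightarrow> (int^'n) set" and H :: "(real^'n) set"
  assumes "prime p"
    and "standard_semigroup S"
    and "p_system p S T"
    and "truncating_halfspace (cone_of (rvec ` S)) H"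
  shows "(\<lambda>e. real (card {t \<in> T (p ^ e). rvec t \<in> (\<lambda>u. real (p ^ e) *\<^sub>R u) ` H})
                / real (p ^ e) ^ CARD('n))
         \<longlonglongrightarrow> measure lebesgue (p_body p S T \<inter> H)"
proof -
  obtain b \<alpha> where b: "\<forall>u\<in>cone_of (rvec ` S). u \<noteq> 0 \<longrightarrow> inner u b > 0"
    and H: "H = {u. inner u b < \<alpha>}"
    using assms(4) unfolding truncating_halfspace_def by blast
  interpret truncated_p_system p S T b
    using prime_gt_1_nat[OF assms(1)] assms(2,3) b unfolding standard_semigroup_def
    by unfold_locales auto
  have "H = halfspace \<alpha>" by (simp add: H halfspace_def)
  then show ?thesis using tendsto_counted[of \<alpha>] by (simp add: counted_def)
qed

end
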